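(* Let $G=(V,E^+\cup E^-)$ be a signed graph and let $D$ be an almost valid drawing of $G$ in the circumference $\mathcal{C}$. Then $G$ has a valid drawing in $\mathcal{C}$.
   Context: A signed graph $G=(V,E^+\cup E^-)$ is a finite, undirected, connected, loopless graph without parallel edges whose edge set is partitioned into positive edges $E^+$ and negative edges $E^-$ (with $E^+\cap E^-=\emptyset$). For $i\in V$, $N^+(i)=\{j: ij\in E^+\}$ and $N^-(i)=\{j: ij\in E^-\}$. The circumference is $\mathcal{C}=\{(x,y)\in\mathbb{R}^2:\sqrt{x^2+y^2}=1\}$; each point is identified with an angle in $[0,2\pi)$, and the distance between points $p,q$ is the measure of the smaller angle they form with the origin, i.e. for $q\le p$, $d(p,q)=\min\{(p-q)\bmod 2\pi,(2\pi-p+q)\bmod 2\pi\}$. A drawing of $G$ in $\mathcal{C}$ is an injection $D:V\to\mathcal{C}$. A drawing is valid if for all $i\in V$, all $j\in N^+(i)$ and all $k\in N^-(i)$, $d(D(i),D(j))<d(D(i),D(k))$. A drawing is almost valid if there exists $\delta>0$ such that for all $i\in V$, all $j\in N^+(i)$ and all $k\in N^-(i)$, $d(D(i),D(j))\le\delta\le d(D(i),D(k))$. *)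

theory Defs
  imports Complex_Main
begin

definition signed_graph :: "'a set \<Rightarrow> 'a set set \<Rightarrow> 'a set set \<Rightarrow> bool" where
  "signed_graph V Ep En \<longleftrightarrow>
     finite V \<and> V \<noteq> {} \<and>
     (\<forall>e \<in> Ep \<union> En. e \<subseteq> V \<and> card e = 2) \<and>
     Ep \<inter> En = {} \<and>
     (\<forall>u\<in>V. \<forall>v\<in>V. (u, v) \<in> ({(x, y). {x, y} \<in> Ep \<union> En})\<^sup>*)"

definition pos_nbrs :: "'a set set \<Rightarrow> 'a \<Rightarrow> 'a set" where
  "pos_nbrs Ep i = {j. {i, j} \<in> Ep}"

definition neg_nbrs :: "'a set set \<Rightarrow> 'a \<Rightarrow> 'a set" where
  "neg_nbrs En i = {j. {i, j} \<in> En}"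

text \<open>Points of the circumference are identified with angles in [0, 2 pi).
Distance = measure of the smaller angle.\<close>
definition circ_dist :: "real \<Rightarrow> real \<Rightarrow> real" where
  "circ_dist p q = min \<bar>p - q\<bar> (2 * pi - \<bar>p - q\<bar>)"

definition drawing :: "'a set \<Rightarrow> ('a \<Rightarrow> real) \<Rightarrow> bool" where
  "drawing V D \<longleftrightarrow> inj_on D V \<and> D ` V \<subseteq> {0..<2 * pi}"

definition valid_drawing :: "'a set \<Rightarrow> 'a set set \<Rightarrow> 'a set set \<Rightarrow> ('a \<Rightarrow> real) \<Rightarrow> bool" where
  "valid_drawing V Ep En D \<longleftrightarrow> drawing V D \<and>
     (\<forall>i\<in>V. \<forall>j\<in>pos_nbrs Ep i. \<forall>k\<in>neg_nbrs En i.
        circ_dist (D i) (D j) < circ_dist (D i) (D k))"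

definition almost_valid_drawing :: "'a set \<Rightarrow> 'a set set \<Rightarrow> 'a set set \<Rightarrow> ('a \<Rightarrow> real) \<Rightarrow> bool" where
  "almost_valid_drawing V Ep En D \<longleftrightarrow> drawing V D \<and>
     (\<exists>\<delta>>0. \<forall>i\<in>V. \<forall>j\<in>pos_nbrs Ep i. \<forall>k\<in>neg_nbrs En i.
        circ_dist (D i) (D j) \<le> \<delta> \<and> \<delta> \<le> circ_dist (D i) (D k))"

end

theory Submission imports Defs begin

text \<open>Let \<delta> witness almost validity. Strict inequalities survive any small perturbation, so
only the ties \<open>d(i,j) = \<delta> = d(i,k)\<close> need care; in a tie j and k lie on opposite sides of i at
distance exactly \<delta>. Move every vertex counterclockwise by \<open>\<epsilon>\<close> times a weight that counts, with
sign, its tight partners: a positive partner at counterclockwise distance \<delta> pulls the vertex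
forward, a positive partner at clockwise distance \<delta> pulls it back, and negative partners push
the opposite way. Since a point has at most one partner on each side, in every tie the tight
positive distance shrinks by at least \<open>2\<epsilon>\<close> and the tight negative one grows by at least \<open>2\<epsilon>\<close>.\<close>

lemma circ_dist_commute: "circ_dist p q = circ_dist q p"
  by (simp add: circ_dist_def abs_minus_commute)

lemma tendsto_circ_dist [tendsto_intros]:
  "(f \<longlongrightarrow> p) F \<Longrightarrow> (g \<longlongrightarrow> q) F \<Longrightarrow> ((\<lambda>x. circ_dist (f x) (g x)) \<longlongrightarrow> circ_dist p q) F"
  unfolding circ_dist_def by (intro tendsto_intros)

definition ccw_shift :: "real \<Rightarrow> real \<Rightarrow> real \<Rightarrow> bool" where
  "ccw_shift d p q \<longleftrightarrow> q - p = d \<or> q - p = d - 2 * pi"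

lemma ccw_shift_unique:
  "ccw_shift d p q \<Longrightarrow> ccw_shift d p r \<Longrightarrow> q \<in> {0..<2*pi} \<Longrightarrow> r \<in> {0..<2*pi} \<Longrightarrow> q = r"
  unfolding ccw_shift_def by auto

lemma ccw_shift_reverse: "ccw_shift d q p \<longleftrightarrow> ccw_shift (2 * pi - d) p q"
  unfolding ccw_shift_def by auto

lemma circ_dist_tie:
  assumes "p \<in> {0..<2*pi}" "q \<in> {0..<2*pi}" "r \<in> {0..<2*pi}" "q \<noteq> r"
    and "circ_dist p q = d" "circ_dist p r = d"
  shows "0 < d \<and> d < pi \<and>
    (ccw_shift d p q \<and> ccw_shift d r p \<or> ccw_shift d q p \<and> ccw_shift d p r)"
  using assms unfolding circ_dist_def ccw_shift_def by (auto simp: min_def abs_if split: if_splits)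

lemma circ_dist_ccw_shift_perturb:
  assumes "ccw_shift d p q" "0 < d" "d < pi" "\<bar>t\<bar> < d" "\<bar>t\<bar> < pi - d" "q' - p' = q - p + t"
  shows "circ_dist p' q' = d + t"
  using assms unfolding ccw_shift_def circ_dist_def by (auto simp: min_def abs_if)

lemma eventually_circ_dist_ccw_shift:
  assumes "ccw_shift d p q" "0 < d" "d < pi"
  shows "\<forall>\<^sub>F \<epsilon> in at_right 0. circ_dist (p + \<epsilon> * a) (q + \<epsilon> * b) = d + \<epsilon> * (b - a)"
proof -
  have "((\<lambda>\<epsilon>. \<bar>\<epsilon> * (b - a)\<bar>) \<longlongrightarrow> 0) (at_right 0)"
    by (auto intro!: tendsto_eq_intros)
  then have "\<forall>\<^sub>F \<epsilon> in at_right 0. \<bar>\<epsilon> * (b - a)\<bar> < min d (pi - d)"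
    using assms by (intro order_tendstoD) auto
  then show ?thesis
    by eventually_elim (rule circ_dist_ccw_shift_perturb[OF assms]; auto simp: algebra_simps)
qed

lemma eventually_drawing_perturb:
  assumes "finite V" "drawing V D" "\<And>v. v \<in> V \<Longrightarrow> 0 \<le> h v"
  shows "\<forall>\<^sub>F \<epsilon> in at_right 0. drawing V (\<lambda>v. D v + \<epsilon> * h v)"
proof -
  have inj: "inj_on D V" and range: "\<And>v. v \<in> V \<Longrightarrow> D v \<in> {0..<2*pi}"
    using assms(2) unfolding drawing_def by auto
  have "\<forall>\<^sub>F \<epsilon> in at_right 0. \<forall>u\<in>V. \<forall>v\<in>V. u \<noteq> v \<longrightarrow> D u + \<epsilon> * h u \<noteq> D v + \<epsilon> * h v"
  proof (intro eventually_ball_finite[OF assms(1)] ballI)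
    fix u v assume "u \<in> V" "v \<in> V"
    then have "u \<noteq> v \<longrightarrow> D u - D v \<noteq> 0"
      using inj by (auto simp: inj_on_def)
    moreover have "((\<lambda>\<epsilon>. D u + \<epsilon> * h u - (D v + \<epsilon> * h v)) \<longlongrightarrow> D u - D v) (at_right 0)"
      by (auto intro!: tendsto_eq_intros)
    ultimately show "\<forall>\<^sub>F \<epsilon> in at_right 0. u \<noteq> v \<longrightarrow> D u + \<epsilon> * h u \<noteq> D v + \<epsilon> * h v"
      by (cases "u = v") (auto elim!: eventually_mono dest!: tendsto_imp_eventually_ne)
  qed
  moreover have "\<forall>\<^sub>F \<epsilon> in at_right 0. \<forall>v\<in>V. D v + \<epsilon> * h v < 2 * pi"
  proof (intro eventually_ball_finite[OF assms(1)] ballI order_tendstoD(2))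
    fix v assume "v \<in> V"
    show "((\<lambda>\<epsilon>. D v + \<epsilon> * h v) \<longlongrightarrow> D v) (at_right 0)"
      by (auto intro!: tendsto_eq_intros)
    show "D v < 2 * pi" using range[OF \<open>v \<in> V\<close>] by simp
  qed
  ultimately show ?thesis
    using eventually_at_right_less[of 0]
  proof eventually_elim
    case (elim \<epsilon>)
    then show ?case
      using range assms(3) unfolding drawing_def inj_on_def by (auto intro!: add_nonneg_nonneg)
  qed
qed

definition edge_sign :: "'a set set \<Rightarrow> 'a set set \<Rightarrow> 'a set \<Rightarrow> real" where
  "edge_sign Ep En e = (if e \<in> Ep then 1 else if e \<in> En then -1 else 0)"

definition ccw_partners :: "'a set \<Rightarrow> ('a \<Rightarrow> real) \<Rightarrow> real \<Rightarrow> 'a \<Rightarrow> 'a set" where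
  "ccw_partners V D d v = {u \<in> V. ccw_shift d (D v) (D u)}"

definition partner_sign ::
    "'a set \<Rightarrow> 'a set set \<Rightarrow> 'a set set \<Rightarrow> ('a \<Rightarrow> real) \<Rightarrow> real \<Rightarrow> 'a \<Rightarrow> real" where
  "partner_sign V Ep En D d v = (\<Sum>u \<in> ccw_partners V D d v. edge_sign Ep En {v, u})"

text \<open>The partner at clockwise distance \<open>d\<close> is the one at counterclockwise distance \<open>2\<pi> - d\<close>.\<close>
definition tight_weight ::
    "'a set \<Rightarrow> 'a set set \<Rightarrow> 'a set set \<Rightarrow> ('a \<Rightarrow> real) \<Rightarrow> real \<Rightarrow> 'a \<Rightarrow> real" where
  "tight_weight V Ep En D d v = partner_sign V Ep En D d v - partner_sign V Ep En D (2 * pi - d) v"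

lemma ccw_partners_eq_singleton:
  assumes "drawing V D" "u \<in> ccw_partners V D d v"
  shows "ccw_partners V D d v = {u}"
  using assms ccw_shift_unique[of d "D v"]
  unfolding ccw_partners_def drawing_def inj_on_def by blast

lemma partner_sign_eq:
  assumes "drawing V D" "u \<in> ccw_partners V D d v"
  shows "partner_sign V Ep En D d v = edge_sign Ep En {v, u}"
  unfolding partner_sign_def ccw_partners_eq_singleton[OF assms] by simp

lemma abs_partner_sign_le:
  assumes "drawing V D"
  shows "\<bar>partner_sign V Ep En D d v\<bar> \<le> 1"
proof (cases "ccw_partners V D d v = {}")
  case False
  then obtain u where "u \<in> ccw_partners V D d v" by blast
  then show ?thesis
    using partner_sign_eq[OF assms] by (simp add: edge_sign_def)
qed (simp add: partner_sign_def)

lemma eventually_circ_dist_less: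
  assumes "circ_dist p q < circ_dist r s"
  shows "\<forall>\<^sub>F \<epsilon> in at_right 0.
    circ_dist (p + \<epsilon> * a) (q + \<epsilon> * b) < circ_dist (r + \<epsilon> * c) (s + \<epsilon> * e)"
proof -
  have "((\<lambda>\<epsilon>. circ_dist (r + \<epsilon> * c) (s + \<epsilon> * e) - circ_dist (p + \<epsilon> * a) (q + \<epsilon> * b))
      \<longlongrightarrow> circ_dist r s - circ_dist p q) (at_right 0)"
    by (auto intro!: tendsto_eq_intros)
  then have "\<forall>\<^sub>F \<epsilon> in at_right 0.
      0 < circ_dist (r + \<epsilon> * c) (s + \<epsilon> * e) - circ_dist (p + \<epsilon> * a) (q + \<epsilon> * b)"
    using assms by (intro order_tendstoD(1)) auto
  then show ?thesis by eventually_elim simp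
qed

lemma eventually_less_linear_perturb:
  fixes f g :: "real \<Rightarrow> real"
  assumes "\<forall>\<^sub>F \<epsilon> in at_right 0. f \<epsilon> = c + \<epsilon> * a"
    and "\<forall>\<^sub>F \<epsilon> in at_right 0. g \<epsilon> = c + \<epsilon> * b" and "a < b"
  shows "\<forall>\<^sub>F \<epsilon> in at_right 0. f \<epsilon> < g \<epsilon>"
  using assms(1,2) eventually_at_right_less[of 0]
  by eventually_elim (use assms(3) in \<open>simp add: mult_strict_left_mono\<close>)

lemma eventually_valid_at_triple:
  fixes V :: "'a set" and Ep En :: "'a set set" and D :: "'a \<Rightarrow> real" and \<delta> :: real
  defines "w \<equiv> tight_weight V Ep En D \<delta>"
  assumes draw: "drawing V D" and disj: "Ep \<inter> En = {}"
    and V: "i \<in> V" "j \<in> V" "k \<in> V" and ij: "{i, j} \<in> Ep" and ik: "{i, k} \<in> En"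
    and almost: "circ_dist (D i) (D j) \<le> \<delta>" "\<delta> \<le> circ_dist (D i) (D k)"
  shows "\<forall>\<^sub>F \<epsilon> in at_right 0. circ_dist (D i + \<epsilon> * (2 + w i)) (D j + \<epsilon> * (2 + w j))
                               < circ_dist (D i + \<epsilon> * (2 + w i)) (D k + \<epsilon> * (2 + w k))"
proof (cases "circ_dist (D i) (D j) < circ_dist (D i) (D k)")
  case True
  then show ?thesis by (rule eventually_circ_dist_less)
next
  case False
  then have tie: "circ_dist (D i) (D j) = \<delta>" "circ_dist (D i) (D k) = \<delta>"
    using almost by auto
  have range: "\<And>v. v \<in> V \<Longrightarrow> D v \<in> {0..<2*pi}" and "inj_on D V"
    using draw unfolding drawing_def by auto
  moreover have "j \<noteq> k" using ij ik disj by blast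
  ultimately have "D j \<noteq> D k" using V by (auto simp: inj_on_def)
  then have \<delta>: "0 < \<delta>" "\<delta> < pi" and sides:
    "ccw_shift \<delta> (D i) (D j) \<and> ccw_shift \<delta> (D k) (D i) \<or>
     ccw_shift \<delta> (D j) (D i) \<and> ccw_shift \<delta> (D i) (D k)"
    using circ_dist_tie[OF range[OF V(1)] range[OF V(2)] range[OF V(3)] _ tie] by auto
  have sign_ij: "edge_sign Ep En {i, j} = 1" "edge_sign Ep En {j, i} = 1"
    and sign_ik: "edge_sign Ep En {i, k} = -1" "edge_sign Ep En {k, i} = -1"
    using ij ik disj by (auto simp: edge_sign_def insert_commute)
  have bound: "\<bar>partner_sign V Ep En D d v\<bar> \<le> 1" for d v
    using abs_partner_sign_le[OF draw] .
  have shift: "\<forall>\<^sub>F \<epsilon> in at_right 0. circ_dist (D p + \<epsilon> * (2 + w p)) (D q + \<epsilon> * (2 + w q))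
                 = \<delta> + \<epsilon> * (w q - w p)" if "ccw_shift \<delta> (D p) (D q)" for p q
    using eventually_circ_dist_ccw_shift[OF that \<delta>, of "2 + w p" "2 + w q"]
    by (simp add: algebra_simps)
  have commute: "circ_dist (D q + \<epsilon> * (2 + w q)) (D i + \<epsilon> * (2 + w i))
      = circ_dist (D i + \<epsilon> * (2 + w i)) (D q + \<epsilon> * (2 + w q))" for q \<epsilon>
    by (rule circ_dist_commute)
  from sides show ?thesis
  proof (elim disjE conjE)
    assume ccw_ij: "ccw_shift \<delta> (D i) (D j)" and ccw_ki: "ccw_shift \<delta> (D k) (D i)"
    then have "j \<in> ccw_partners V D \<delta> i" "k \<in> ccw_partners V D (2 * pi - \<delta>) i"
      "i \<in> ccw_partners V D (2 * pi - \<delta>) j" "i \<in> ccw_partners V D \<delta> k"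
      using V by (simp_all add: ccw_partners_def ccw_shift_reverse[symmetric])
    then have "w i = 2" "w j \<le> 0" "w k \<le> 0"
      using bound[of \<delta> j] bound[of "2 * pi - \<delta>" k] sign_ij sign_ik
      unfolding w_def tight_weight_def by (simp_all add: partner_sign_eq[OF draw])
    then show ?thesis
      by (intro eventually_less_linear_perturb[OF shift[OF ccw_ij]
            shift[OF ccw_ki, unfolded commute]]) auto
  next
    assume ccw_ji: "ccw_shift \<delta> (D j) (D i)" and ccw_ik: "ccw_shift \<delta> (D i) (D k)"
    then have "i \<in> ccw_partners V D \<delta> j" "j \<in> ccw_partners V D (2 * pi - \<delta>) i"
      "k \<in> ccw_partners V D \<delta> i" "i \<in> ccw_partners V D (2 * pi - \<delta>) k"
      using V by (simp_all add: ccw_partners_def ccw_shift_reverse[symmetric])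
    then have "w i = -2" "w j \<ge> 0" "w k \<ge> 0"
      using bound[of "2 * pi - \<delta>" j] bound[of \<delta> k] sign_ij sign_ik
      unfolding w_def tight_weight_def by (simp_all add: partner_sign_eq[OF draw])
    then show ?thesis
      by (intro eventually_less_linear_perturb[OF shift[OF ccw_ji, unfolded commute]
            shift[OF ccw_ik]]) auto
  qed
qed

lemma eventually_valid_tight_perturbation:
  fixes V :: "'a set" and Ep En :: "'a set set" and D :: "'a \<Rightarrow> real" and \<delta> :: real
  defines "w \<equiv> tight_weight V Ep En D \<delta>"
  assumes finite: "finite V" and edges: "\<And>e. e \<in> Ep \<union> En \<Longrightarrow> e \<subseteq> V"
    and disj: "Ep \<inter> En = {}" and draw: "drawing V D"
    and almost: "\<And>i j k. i \<in> V \<Longrightarrow> j \<in> pos_nbrs Ep i \<Longrightarrow> k \<in> neg_nbrs En i \<Longrightarrow>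
      circ_dist (D i) (D j) \<le> \<delta> \<and> \<delta> \<le> circ_dist (D i) (D k)"
  shows "\<forall>\<^sub>F \<epsilon> in at_right 0. valid_drawing V Ep En (\<lambda>v. D v + \<epsilon> * (2 + w v))"
  \<comment> \<open>the offset 2 makes all displacements nonnegative, keeping the points in \<open>[0, 2\<pi>)\<close>\<close>
proof -
  have "\<forall>\<^sub>F \<epsilon> in at_right 0. drawing V (\<lambda>v. D v + \<epsilon> * (2 + w v))"
  proof (rule eventually_drawing_perturb[OF finite draw])
    fix v
    show "0 \<le> 2 + w v"
      using abs_partner_sign_le[OF draw, of Ep En \<delta> v]
        abs_partner_sign_le[OF draw, of Ep En "2 * pi - \<delta>" v]
      unfolding w_def tight_weight_def by linarith
  qed
  moreover have "\<forall>\<^sub>F \<epsilon> in at_right 0. \<forall>i\<in>V. \<forall>j\<in>pos_nbrs Ep i. \<forall>k\<in>neg_nbrs En i.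
      circ_dist (D i + \<epsilon> * (2 + w i)) (D j + \<epsilon> * (2 + w j))
        < circ_dist (D i + \<epsilon> * (2 + w i)) (D k + \<epsilon> * (2 + w k))"
  proof (intro eventually_ball_finite finite ballI)
    fix i j k assume i: "i \<in> V" and j: "j \<in> pos_nbrs Ep i" and k: "k \<in> neg_nbrs En i"
    have "{i, j} \<in> Ep" "{i, k} \<in> En"
      using j k unfolding pos_nbrs_def neg_nbrs_def by auto
    then show "\<forall>\<^sub>F \<epsilon> in at_right 0. circ_dist (D i + \<epsilon> * (2 + w i)) (D j + \<epsilon> * (2 + w j))
        < circ_dist (D i + \<epsilon> * (2 + w i)) (D k + \<epsilon> * (2 + w k))"
      unfolding w_def using edges almost[OF i j k]
      by (intro eventually_valid_at_triple[OF draw disj i]) auto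
  next
    show "finite (pos_nbrs Ep i)" "finite (neg_nbrs En i)" for i
      using edges by (auto intro: finite_subset[OF _ finite] simp: pos_nbrs_def neg_nbrs_def)
  qed
  ultimately show ?thesis
    unfolding valid_drawing_def by eventually_elim blast
qed

theorem lemma2:
  fixes V :: "'a set" and Ep En :: "'a set set" and D :: "'a \<Rightarrow> real"
  assumes "signed_graph V Ep En"
    and "almost_valid_drawing V Ep En D"
  shows "\<exists>D'. valid_drawing V Ep En D'"
proof -
  obtain \<delta> where "\<And>i j k. i \<in> V \<Longrightarrow> j \<in> pos_nbrs Ep i \<Longrightarrow> k \<in> neg_nbrs En i \<Longrightarrow>
      circ_dist (D i) (D j) \<le> \<delta> \<and> \<delta> \<le> circ_dist (D i) (D k)"
    using assms(2) unfolding almost_valid_drawing_def by blast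
  moreover have "finite V" "\<And>e. e \<in> Ep \<union> En \<Longrightarrow> e \<subseteq> V" "Ep \<inter> En = {}"
    using assms(1) unfolding signed_graph_def by auto
  moreover have "drawing V D"
    using assms(2) unfolding almost_valid_drawing_def by auto
  ultimately have "\<forall>\<^sub>F \<epsilon> in at_right 0.
      valid_drawing V Ep En (\<lambda>v. D v + \<epsilon> * (2 + tight_weight V Ep En D \<delta> v))"
    by (intro eventually_valid_tight_perturbation)
  then show ?thesis
    using eventually_happens' trivial_limit_at_right_real by blast
qed

end
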